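(* For every $\varphi\in\Phi_\mathbb{Z}$, $\dim(\varphi)$ is an integer and $$\dim(\varphi)\equiv-\sum_{j=1}^d j\,\mu_{1,j}(\varphi)\pmod{b-1}.$$
   Context: Fix integers $b\ge2$, $d\ge1$. A function $f:\mathbb{R}\to\mathbb{R}\cup\{-\infty\}$ is called strictly increasing if it is nondecreasing and strictly increasing on the set where it is finite. $\Phi$ is the set of $d$-tuples $\varphi=(\varphi_1,\dots,\varphi_d)$ of functions $\mathbb{R}\to\mathbb{R}\cup\{-\infty\}$ such that: (1) $\varphi_1\ge\dots\ge\varphi_d$; (2) each $\varphi_i$ is strictly increasing and right-continuous; (3) for each $i$ there is $q_i\in\mathbb{R}$ such that $\varphi_i$ is finite exactly on $[q_i,+\infty[$, piecewise affine there with derivative $b$ almost everywhere, and $\varphi_i(q)=bq-q_i$ for $q$ large; (4) there exist strictly increasing right-continuous $\psi_1\le\dots\le\psi_d:\mathbb{R}\to\mathbb{R}\cup\{-\infty\}$ with $\#\{i:\varphi_i(q)=\mu\}=\#\{j:\psi_j(\mu)=q\}$ for all $(q,\mu)\in\mathbb{R}^2$ (uniquely determined). $\Phi_\mathbb{Z}$ is the set of $\varphi\in\Phi$ such that each $q_i\in\mathbb{Z}$ and each $\varphi_i$ has all discontinuity points in $\frac1b\mathbb{Z}$. Set $\varphi_i(-\infty)=\psi_j(-\infty)=-\infty$. For $1\le j\le d$, $\mu_{1,j}(\varphi)$ is the infimum of the reals $\mu$ such that either $\varphi_1(\psi_j(\mu))>\mu$, or $\varphi_1(\psi_j(\mu))=\mu$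 and $\#\{i'\le 1:\varphi_{i'}(q)=\mu\}\le\#\{j'\le j:\psi_{j'}(\mu)=q\}$ with $q=\psi_j(\mu)$. With $\mathrm{Leb}$ the Lebesgue measure, $\dim(\varphi):=\sum_{1\le i<i'\le d}\mathrm{Leb}(\varphi_{i'}(\mathbb{R})\setminus\varphi_i(\mathbb{R}))$. *)

theory Defs
  imports "HOL-Analysis.Analysis"
begin

text \<open>Functions R -> R union {-infinity} are modelled as real => ereal never taking the value +infinity.
  Indices run over 1..d.\<close>

definition no_pinf :: "(real \<Rightarrow> ereal) \<Rightarrow> bool" where
  "no_pinf f \<longleftrightarrow> (\<forall>x. f x \<noteq> \<infinity>)"

definition strictly_incr :: "(real \<Rightarrow> ereal) \<Rightarrow> bool" where
  "strictly_incr f \<longleftrightarrow> mono f \<and>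
     (\<forall>x y. x < y \<and> f x \<noteq> -\<infinity> \<and> f y \<noteq> -\<infinity> \<longrightarrow> f x < f y)"

definition right_cont :: "(real \<Rightarrow> ereal) \<Rightarrow> bool" where
  "right_cont f \<longleftrightarrow> (\<forall>x. continuous (at_right x) f)"

text \<open>Condition (3) with given q0: finite exactly on [q0,+inf[, piecewise affine there
  (finitely many break points S, affine of slope b on each piece, hence derivative b a.e.),
  and equal to b q - q0 for q large.\<close>
definition tail_cond :: "nat \<Rightarrow> (real \<Rightarrow> ereal) \<Rightarrow> real \<Rightarrow> bool" where
  "tail_cond b f q0 \<longleftrightarrow>
     (\<forall>x. f x \<noteq> -\<infinity> \<longleftrightarrow> q0 \<le> x) \<and>
     (\<exists>S. finite S \<and>
        (\<forall>x y. q0 < x \<and> x \<le> y \<and> (\<forall>s\<in>S. \<not> (x \<le> s \<and> s \<le> y)) \<longrightarrow>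
               f y = f x + ereal (real b * (y - x)))) \<and>
     (\<exists>Q. \<forall>q\<ge>Q. f q = ereal (real b * q - q0))"

definition conj_family :: "nat \<Rightarrow> (nat \<Rightarrow> real \<Rightarrow> ereal) \<Rightarrow> (nat \<Rightarrow> real \<Rightarrow> ereal) \<Rightarrow> bool" where
  "conj_family d \<phi> \<psi> \<longleftrightarrow>
     (\<forall>j\<in>{1..d}. no_pinf (\<psi> j) \<and> strictly_incr (\<psi> j) \<and> right_cont (\<psi> j)) \<and>
     (\<forall>j. 1 \<le> j \<and> j < d \<longrightarrow> (\<forall>x. \<psi> j x \<le> \<psi> (Suc j) x)) \<and>
     (\<forall>q \<mu> :: real. card {i\<in>{1..d}. \<phi> i q = ereal \<mu>} = card {j\<in>{1..d}. \<psi> j \<mu> = ereal q})"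

definition Phi :: "nat \<Rightarrow> nat \<Rightarrow> (nat \<Rightarrow> real \<Rightarrow> ereal) \<Rightarrow> bool" where
  "Phi b d \<phi> \<longleftrightarrow>
     (\<forall>i. 1 \<le> i \<and> i < d \<longrightarrow> (\<forall>x. \<phi> (Suc i) x \<le> \<phi> i x)) \<and>
     (\<forall>i\<in>{1..d}. no_pinf (\<phi> i) \<and> strictly_incr (\<phi> i) \<and> right_cont (\<phi> i)) \<and>
     (\<forall>i\<in>{1..d}. \<exists>q0. tail_cond b (\<phi> i) q0) \<and>
     (\<exists>\<psi>. conj_family d \<phi> \<psi>)"

definition Phi_Z :: "nat \<Rightarrow> nat \<Rightarrow> (nat \<Rightarrow> real \<Rightarrow> ereal) \<Rightarrow> bool" where
  "Phi_Z b d \<phi> \<longleftrightarrow> Phi b d \<phi> \<and>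
     (\<forall>i\<in>{1..d}. (\<exists>q0::int. tail_cond b (\<phi> i) (of_int q0)) \<and>
        (\<forall>x. \<not> isCont (\<phi> i) x \<longrightarrow> (\<exists>k::int. x = of_int k / real b)))"

definition ext_minf :: "(real \<Rightarrow> ereal) \<Rightarrow> ereal \<Rightarrow> ereal" where
  "ext_minf f q = (if q = -\<infinity> then -\<infinity> else f (real_of_ereal q))"

definition mu1 :: "nat \<Rightarrow> (nat \<Rightarrow> real \<Rightarrow> ereal) \<Rightarrow> (nat \<Rightarrow> real \<Rightarrow> ereal) \<Rightarrow> nat \<Rightarrow> real" where
  "mu1 d \<phi> \<psi> j = Inf {\<mu>::real.
      ext_minf (\<phi> 1) (\<psi> j \<mu>) > ereal \<mu> \<or>
      (ext_minf (\<phi> 1) (\<psi> j \<mu>) = ereal \<mu> \<and>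
        card {i'\<in>{1..1}. ext_minf (\<phi> i') (\<psi> j \<mu>) = ereal \<mu>}
          \<le> card {j'\<in>{1..j}. \<psi> j' \<mu> = \<psi> j \<mu>})}"

definition dim_phi :: "nat \<Rightarrow> (nat \<Rightarrow> real \<Rightarrow> ereal) \<Rightarrow> real" where
  "dim_phi d \<phi> = (\<Sum>i\<in>{1..d}. \<Sum>i'\<in>{i<..d}.
      measure lebesgue {\<mu>::real. ereal \<mu> \<in> range (\<phi> i') \<and> ereal \<mu> \<notin> range (\<phi> i)})"

end

theory Submission
  imports Defs
begin

text \<open>
  Work in a window \<open>[lo, hi[\<close> below which no \<open>\<phi>\<^sub>i\<close> has values and above which
  every \<open>\<phi>\<^sub>i\<close> is onto.  Since \<open>\<phi>\<^sub>i\<close> has slope \<open>b\<close> and ends on the line \<open>b q - q\<^sub>i\<close>, the set of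
  values it misses in the window has measure \<open>(b - 1) q\<^sub>i - lo\<close>.  Conjugacy shows that
  \<open>\<psi>\<^sub>j(\<mu>) = -\<infinity>\<close> exactly for \<open>j \<le> N(\<mu>)\<close>, the number of components missing \<open>\<mu>\<close>, and
  that \<open>\<mu>\<^sub>1\<^sub>,\<^sub>j\<close> is the point \<open>r\<^sub>j\<close> from which on \<open>\<psi>\<^sub>j\<close> is finite.  A counting identity for
  0/1-words, integrated over the window, then yields
  \<open>dim \<phi> + \<Sum>\<^sub>j j r\<^sub>j = (b - 1) \<Sum>\<^sub>i (d + 1 - i) q\<^sub>i\<close>.  Finally each \<open>r\<^sub>j\<close> is an integer: it is a
  value of some \<open>\<phi>\<^sub>i\<close> at a point of \<open>\<int>/b\<close>, and such values are integers by a maximality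
  argument on the finitely many possible exceptions.
\<close>

lemma eventually_at_left_less: "\<forall>\<^sub>F y in at_left (z::real). y < z"
  unfolding eventually_at_left_field by (intro exI[of _ "z - 1"]) auto

lemma card_filter_split: "card {x\<in>{1..d::nat}. P x} + card {x\<in>{1..d}. \<not> P x} = d"
proof -
  have "card {x\<in>{1..d::nat}. P x} + card {x\<in>{1..d}. \<not> P x}
      = card ({x\<in>{1..d::nat}. P x} \<union> {x\<in>{1..d}. \<not> P x})"
    by (rule card_Un_disjoint[symmetric]) auto
  also have "{x\<in>{1..d::nat}. P x} \<union> {x\<in>{1..d}. \<not> P x} = {1..d}" by auto
  finally show ?thesis by simp
qed

lemma downward_closed_initial_segment:
  assumes "A \<subseteq> {1..(d::nat)}" "\<And>a a'. a \<in> A \<Longrightarrow> 1 \<le> a' \<Longrightarrow> a' \<le> a \<Longrightarrow> a' \<in> A"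
  shows "A = {1..card A}"
proof (cases "A = {}")
  case False
  have fin: "finite A" using assms(1) finite_subset by blast
  define m where "m = Max A"
  have max: "m \<in> A" unfolding m_def using fin False by simp
  have "A = {1..m}"
  proof
    show "A \<subseteq> {1..m}" using assms(1) fin unfolding m_def by auto
    show "{1..m} \<subseteq> A" using assms(2)[OF max] by auto
  qed
  then show ?thesis by simp
qed simp

lemma sum_indicator_eq_card:
  "(\<Sum>i\<in>{1..n::nat}. if P i then 1 else (0::real)) = real (card {i\<in>{1..n}. P i})"
  using sum.inter_filter[of "{1..n}" "\<lambda>_. (1::real)" P] by simp

lemma sum_first_reals: "(\<Sum>j\<in>{1..m}. real j) = real m * (real m + 1) / 2"
  by (induction m) (auto simp: field_simps)

lemma pairs_count_Suc:
  "(\<Sum>i\<in>{1..Suc n}. \<Sum>i'\<in>{i<..Suc n}. if z i \<and> \<not> z i' then 1 else (0::real))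
     = (\<Sum>i\<in>{1..n}. \<Sum>i'\<in>{i<..n}. if z i \<and> \<not> z i' then 1 else (0::real))
       + (if z (Suc n) then 0 else real (card {i\<in>{1..n}. z i}))"
proof -
  have inner: "(\<Sum>i'\<in>{i<..Suc n}. if z i \<and> \<not> z i' then 1 else (0::real))
      = (\<Sum>i'\<in>{i<..n}. if z i \<and> \<not> z i' then 1 else (0::real)) + (if z i \<and> \<not> z (Suc n) then 1 else 0)"
    if "i \<in> {1..n}" for i
  proof -
    have "{i<..Suc n} = insert (Suc n) {i<..n}" using that by auto
    then show ?thesis by (simp add: add.commute)
  qed
  have "(\<Sum>i\<in>{1..Suc n}. \<Sum>i'\<in>{i<..Suc n}. if z i \<and> \<not> z i' then 1 else (0::real))
      = (\<Sum>i\<in>{1..n}. \<Sum>i'\<in>{i<..Suc n}. if z i \<and> \<not> z i' then 1 else (0::real))"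
    by (simp add: sum.cl_ivl_Suc)
  also have "\<dots> = (\<Sum>i\<in>{1..n}. (\<Sum>i'\<in>{i<..n}. if z i \<and> \<not> z i' then 1 else (0::real))
                              + (if z i \<and> \<not> z (Suc n) then 1 else 0))"
    by (rule sum.cong[OF refl]) (rule inner)
  also have "\<dots> = (\<Sum>i\<in>{1..n}. \<Sum>i'\<in>{i<..n}. if z i \<and> \<not> z i' then 1 else (0::real))
        + (\<Sum>i\<in>{1..n}. if z i \<and> \<not> z (Suc n) then 1 else (0::real))"
    by (rule sum.distrib)
  also have "(\<Sum>i\<in>{1..n}. if z i \<and> \<not> z (Suc n) then 1 else (0::real))
      = (if z (Suc n) then 0 else real (card {i\<in>{1..n}. z i}))"
    using sum_indicator_eq_card[where n=n and P=z] by auto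
  finally show ?thesis .
qed

text \<open>Induction on \<open>n\<close>: appending a letter
  raises the weight of every earlier \<open>1\<close> by one.\<close>
lemma weighted_ones_count:
  "real (card {i\<in>{1..n::nat}. z i}) * (real (card {i\<in>{1..n}. z i}) + 1) / 2
     + (\<Sum>i\<in>{1..n}. \<Sum>i'\<in>{i<..n}. if z i \<and> \<not> z i' then 1 else (0::real))
   = (\<Sum>i\<in>{1..n}. if z i then real (n + 1 - i) else 0)"
proof (induction n)
  case (Suc n)
  define c where "c = card {i\<in>{1..n}. z i}"
  have ones: "real (card {i\<in>{1..Suc n}. z i}) = real c + (if z (Suc n) then 1 else 0)"
    using sum_indicator_eq_card[where n="Suc n" and P=z] sum_indicator_eq_card[where n=n and P=z]
    unfolding c_def by (simp add: sum.cl_ivl_Suc)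
  have weights: "(\<Sum>i\<in>{1..Suc n}. if z i then real (Suc n + 1 - i) else 0)
     = (\<Sum>i\<in>{1..n}. if z i then real (n + 1 - i) else 0) + real c + (if z (Suc n) then 1 else 0)"
  proof -
    have "(\<Sum>i\<in>{1..n}. if z i then real (Suc n + 1 - i) else 0)
        = (\<Sum>i\<in>{1..n}. (if z i then real (n + 1 - i) else 0) + (if z i then 1 else 0))"
      by (rule sum.cong) (auto simp: of_nat_diff)
    also have "\<dots> = (\<Sum>i\<in>{1..n}. if z i then real (n + 1 - i) else 0) + real c"
      using sum_indicator_eq_card[where n=n and P=z] unfolding sum.distrib c_def by simp
    finally show ?thesis by (simp add: sum.cl_ivl_Suc)
  qed
  show ?case
    using Suc.IH unfolding ones pairs_count_Suc weights c_def[symmetric]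
    by (cases "z (Suc n)") (simp_all add: field_simps)
qed simp

lemma sum_upper_pairs:
  "(\<Sum>i\<in>{1..d::nat}. \<Sum>i'\<in>{i<..d}. g i i') = (\<Sum>p\<in>Sigma {1..d} (\<lambda>i. {i<..d}). g (fst p) (snd p))"
  by (subst sum.Sigma) (auto simp: split_def)

lemma integral_step_function:
  fixes c :: "'i \<Rightarrow> real"
  assumes "finite I" and sets: "\<And>k. k \<in> I \<Longrightarrow> A k \<in> sets M \<and> emeasure M (A k) < \<infinity>"
  shows "integrable M (\<lambda>x. \<Sum>k\<in>I. c k * indicator (A k) x)"
    and "integral\<^sup>L M (\<lambda>x. \<Sum>k\<in>I. c k * indicator (A k) x) = (\<Sum>k\<in>I. c k * measure M (A k))"
proof -
  have int: "integrable M (\<lambda>x. c k * indicator (A k) x :: real)" if "k \<in> I" for k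
    using sets[OF that] by (intro integrable_mult_right integrable_real_indicator) auto
  then show "integrable M (\<lambda>x. \<Sum>k\<in>I. c k * indicator (A k) x)"
    by (rule Bochner_Integration.integrable_sum)
  have "integral\<^sup>L M (\<lambda>x. \<Sum>k\<in>I. c k * indicator (A k) x)
      = (\<Sum>k\<in>I. integral\<^sup>L M (\<lambda>x. c k * indicator (A k) x :: real))"
    by (rule Bochner_Integration.integral_sum) (rule int)
  also have "\<dots> = (\<Sum>k\<in>I. c k * measure M (A k))"
    using sets by (intro sum.cong refl) (auto simp: integral_mult_right_zero)
  finally show "integral\<^sup>L M (\<lambda>x. \<Sum>k\<in>I. c k * indicator (A k) x) = (\<Sum>k\<in>I. c k * measure M (A k))" .
qed

definition rval :: "(real \<Rightarrow> ereal) \<Rightarrow> real \<Rightarrow> real" where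
  "rval f x = real_of_ereal (f x)"

definition seg_image :: "(real \<Rightarrow> ereal) \<Rightarrow> real \<Rightarrow> real \<Rightarrow> real set" where
  "seg_image f x y = {\<mu>. \<exists>z. x \<le> z \<and> z < y \<and> rval f z = \<mu>}"

locale slope_fun =
  fixes b :: nat and f :: "real \<Rightarrow> ereal" and q0 :: real and S :: "real set" and Q :: real
  assumes b1: "b \<ge> 1"
    and nopinf: "\<And>x. f x \<noteq> \<infinity>"
    and fin: "\<And>x. f x \<noteq> -\<infinity> \<longleftrightarrow> q0 \<le> x"
    and smono: "\<And>x y. x < y \<Longrightarrow> f x \<noteq> -\<infinity> \<Longrightarrow> f y \<noteq> -\<infinity> \<Longrightarrow> f x < f y"
    and rc: "\<And>x. continuous (at_right x) f"
    and finS: "finite S"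
    and aff: "\<And>x y. q0 < x \<Longrightarrow> x \<le> y \<Longrightarrow> (\<forall>s\<in>S. \<not> (x \<le> s \<and> s \<le> y)) \<Longrightarrow>
                f y = f x + ereal (real b * (y - x))"
    and tail: "\<And>q. q \<ge> Q \<Longrightarrow> f q = ereal (real b * q - q0)"
    and q0_le_Q: "q0 \<le> Q"
begin

abbreviation F where "F \<equiv> rval f"

lemma bpos: "real b > 0"
  using b1 by simp

lemma f_eq_F: "q0 \<le> x \<Longrightarrow> f x = ereal (F x)"
  using fin[of x] nopinf[of x] unfolding rval_def by (cases "f x") auto

lemma F_strict_mono: "q0 \<le> x \<Longrightarrow> x < y \<Longrightarrow> F x < F y"
  using smono[of x y] f_eq_F[of x] f_eq_F[of y] fin by auto

lemma F_mono: "q0 \<le> x \<Longrightarrow> x \<le> y \<Longrightarrow> F x \<le> F y"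
  using F_strict_mono[of x y] by (cases "x = y") auto

lemma F_affine: "q0 < x \<Longrightarrow> x \<le> y \<Longrightarrow> (\<forall>s\<in>S. \<not> (x \<le> s \<and> s \<le> y)) \<Longrightarrow> F y = F x + real b * (y - x)"
  using aff[of x y] f_eq_F[of x] f_eq_F[of y] by auto

lemma F_tail: "q \<ge> Q \<Longrightarrow> F q = real b * q - q0"
  using tail[of q] unfolding rval_def by simp

lemma F_right_limit:
  assumes "q0 \<le> z" "\<forall>\<^sub>F y in at_right z. F y = c + real b * y"
  shows "F z = c + real b * z"
proof -
  have lim_f: "(f \<longlongrightarrow> f z) (at_right z)" using rc[of z] by (simp add: continuous_within)
  have "((\<lambda>y. ereal (c + real b * y)) \<longlongrightarrow> ereal (c + real b * z)) (at_right z)"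
    by (intro tendsto_intros lim_ereal[THEN iffD2])
  moreover have "\<forall>\<^sub>F y in at_right z. ereal (c + real b * y) = f y"
    using assms(2) eventually_at_right_less[of z]
    by eventually_elim (use f_eq_F assms(1) in auto)
  ultimately have "(f \<longlongrightarrow> ereal (c + real b * z)) (at_right z)"
    by (rule Lim_transform_eventually)
  then have "f z = ereal (c + real b * z)" using tendsto_unique[OF _ lim_f] by simp
  then show ?thesis using f_eq_F[OF assms(1)] by simp
qed

lemma F_left_limit_cont:
  assumes "q0 < z" "isCont f z" "\<forall>\<^sub>F y in at_left z. F y = c + real b * y"
  shows "F z = c + real b * z"
proof -
  have lim_f: "(f \<longlongrightarrow> f z) (at_left z)"
    using assms(2) unfolding continuous_at by (rule tendsto_mono[OF at_le, rotated]) auto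
  have "((\<lambda>y. ereal (c + real b * y)) \<longlongrightarrow> ereal (c + real b * z)) (at_left z)"
    by (intro tendsto_intros lim_ereal[THEN iffD2])
  moreover have "\<forall>\<^sub>F y in at_left z. q0 < y" using assms(1) eventually_at_left_field by blast
  then have "\<forall>\<^sub>F y in at_left z. ereal (c + real b * y) = f y"
    using assms(3) by eventually_elim (use f_eq_F in auto)
  ultimately have "(f \<longlongrightarrow> ereal (c + real b * z)) (at_left z)"
    by (rule Lim_transform_eventually)
  then have "f z = ereal (c + real b * z)" using tendsto_unique[OF _ lim_f] by simp
  then show ?thesis using f_eq_F[of z] assms(1) by simp
qed

lemma F_affine_right:
  assumes "q0 \<le> z" "z < w" "\<forall>s\<in>S. \<not> (z < s \<and> s < w)" "z \<le> y" "y < w"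
  shows "F y = F z + real b * (y - z)"
proof -
  define m where "m = (z + w) / 2"
  have m: "z < m" "m < w" using assms(2) unfolding m_def by auto
  have mid: "F y = F m + real b * (y - m)" if "z < y" "y < w" for y
  proof (cases "m \<le> y")
    case True then show ?thesis
      using F_affine[of m y] assms(1,3) m that by force
  next
    case False
    then have "F m = F y + real b * (m - y)"
      using F_affine[of y m] assms(1,3) m that by force
    then show ?thesis by (simp add: algebra_simps)
  qed
  have "F z = (F m - real b * m) + real b * z"
  proof (rule F_right_limit[OF assms(1)])
    have "\<forall>\<^sub>F y in at_right z. y < w" using assms(2) eventually_at_right_field by blast
    then show "\<forall>\<^sub>F y in at_right z. F y = F m - real b * m + real b * y"
      using eventually_at_right_less[of z]
      by eventually_elim (use mid in \<open>auto simp: algebra_simps\<close>)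
  qed
  then show ?thesis
    using mid[of y] assms(4,5) by (cases "y = z") (auto simp: algebra_simps)
qed

lemma affine_right_germ:
  assumes "q0 \<le> z"
  shows "\<exists>w>z. \<forall>y. z \<le> y \<and> y < w \<longrightarrow> F y = F z + real b * (y - z)"
proof -
  have "\<forall>\<^sub>F w in at_right z. z < w \<and> (\<forall>s\<in>S. \<not> (z < s \<and> s < w))"
  proof (intro eventually_conj eventually_ball_finite[OF finS] ballI)
    show "\<forall>\<^sub>F w in at_right z. z < w" by (rule eventually_at_right_less)
    fix s assume "s \<in> S"
    show "\<forall>\<^sub>F w in at_right z. \<not> (z < s \<and> s < w)"
    proof (cases "z < s")
      case True then show ?thesis
        using eventually_at_right_field[of "\<lambda>w. \<not> (z < s \<and> s < w)" z] by force
    qed auto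
  qed
  then obtain w where "z < w" "\<forall>s\<in>S. \<not> (z < s \<and> s < w)"
    using eventually_happens[of _ "at_right z"] by auto
  then show ?thesis using F_affine_right[OF assms] by blast
qed

lemma affine_left_germ:
  assumes "q0 < z"
  shows "\<exists>c. \<forall>\<^sub>F y in at_left z. q0 < y \<and> F y = c + real b * y"
proof -
  have "\<forall>\<^sub>F y in at_left z. q0 < y \<and> (\<forall>s\<in>S. \<not> (y \<le> s \<and> s < z))"
  proof (intro eventually_conj eventually_ball_finite[OF finS] ballI)
    show "\<forall>\<^sub>F y in at_left z. q0 < y" using assms eventually_at_left_field by blast
    fix s assume "s \<in> S"
    show "\<forall>\<^sub>F y in at_left z. \<not> (y \<le> s \<and> s < z)"
    proof (cases "s < z")
      case True then show ?thesis
        using eventually_at_left_field[of "\<lambda>y. \<not> (y \<le> s \<and> s < z)" z] by force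
    qed auto
  qed
  then obtain a where a: "a < z" "\<And>y. a < y \<Longrightarrow> y < z \<Longrightarrow> q0 < y \<and> (\<forall>s\<in>S. \<not> (y \<le> s \<and> s < z))"
    unfolding eventually_at_left_field by blast
  define m where "m = (a + z) / 2"
  have m: "a < m" "m < z" using a(1) unfolding m_def by auto
  have mid: "F y = F m + real b * (y - m)" if "a < y" "y < z" for y
  proof (cases "m \<le> y")
    case True then show ?thesis
      using F_affine[of m y] a(2)[of m] m that by force
  next
    case False
    then have "F m = F y + real b * (m - y)"
      using F_affine[of y m] a(2)[of y] m that by force
    then show ?thesis by (simp add: algebra_simps)
  qed
  have "\<forall>\<^sub>F y in at_left z. a < y" using a(1) eventually_at_left_field by blast
  then have "\<forall>\<^sub>F y in at_left z. q0 < y \<and> F y = F m - real b * m + real b * y"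
    using eventually_at_left_less[of z]
    by eventually_elim (use mid a(2) in \<open>auto simp: algebra_simps\<close>)
  then show ?thesis by blast
qed

lemma seg_image_no_break:
  assumes "q0 \<le> x" "x \<le> y" and no_break: "\<forall>s\<in>S. \<not> (x < s \<and> s < y)"
  shows "seg_image f x y = {F x ..< F x + real b * (y - x)}"
proof (intro set_eqI iffI)
  fix \<mu> assume "\<mu> \<in> seg_image f x y"
  then obtain z where z: "x \<le> z" "z < y" "F z = \<mu>" unfolding seg_image_def by auto
  have "F z = F x + real b * (z - x)"
    using F_affine_right[of x y z] assms z by auto
  then show "\<mu> \<in> {F x ..< F x + real b * (y - x)}"
    using z bpos by (auto intro!: mult_strict_left_mono)
next
  fix \<mu> assume \<mu>: "\<mu> \<in> {F x ..< F x + real b * (y - x)}"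
  define z where "z = x + (\<mu> - F x) / real b"
  have xz: "x \<le> z" "z < y" using \<mu> bpos unfolding z_def by (auto simp: field_simps)
  have "F z = F x + real b * (z - x)"
    using F_affine_right[of x y z] assms xz by auto
  also have "\<dots> = \<mu>" unfolding z_def using bpos by simp
  finally show "\<mu> \<in> seg_image f x y" unfolding seg_image_def using xz by auto
qed

text \<open>Slope \<open>b\<close> means that \<open>F\<close> stretches every interval by the factor \<open>b\<close>: split \<open>[x, y[\<close> at
  the break points and use that the images of the pieces are disjoint.\<close>
lemma seg_image_measure:
  "q0 \<le> x \<Longrightarrow> x \<le> y \<Longrightarrow>
   seg_image f x y \<in> sets lebesgue \<and> emeasure lebesgue (seg_image f x y) = ennreal (real b * (y - x))"
proof (induction "card (S \<inter> {x<..<y})" arbitrary: x y rule: less_induct)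
  case less
  show ?case
  proof (cases "S \<inter> {x<..<y} = {}")
    case True
    then have "seg_image f x y = {F x ..< F x + real b * (y - x)}"
      using less.prems by (intro seg_image_no_break) auto
    then show ?thesis using less.prems bpos by simp
  next
    case False
    then obtain s where s: "s \<in> S" "x < s" "s < y" by auto
    have fewer_left: "card (S \<inter> {x<..<s}) < card (S \<inter> {x<..<y})"
      and fewer_right: "card (S \<inter> {s<..<y}) < card (S \<inter> {x<..<y})"
      by (rule psubset_card_mono, use finS s in auto)+
    have left: "seg_image f x s \<in> sets lebesgue \<and> emeasure lebesgue (seg_image f x s) = ennreal (real b * (s - x))"
      using less.hyps[OF fewer_left] less.prems s by auto
    have right: "seg_image f s y \<in> sets lebesgue \<and> emeasure lebesgue (seg_image f s y) = ennreal (real b * (y - s))"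
      using less.hyps[OF fewer_right] less.prems s by auto
    have split: "seg_image f x y = seg_image f x s \<union> seg_image f s y"
      unfolding seg_image_def using s
    proof auto
      fix z assume "s \<le> z" "z < y"
      then show "\<exists>z'\<ge>x. z' < y \<and> F z' = F z" using s by (intro exI[of _ z]) auto
    next
      fix z assume "\<forall>z'<y. s \<le> z' \<longrightarrow> F z' \<noteq> F z" "x \<le> z" "z < y"
      then show "\<exists>z'\<ge>x. z' < s \<and> F z' = F z" by (intro exI[of _ z]) force
    qed
    have disj: "seg_image f x s \<inter> seg_image f s y = {}"
      unfolding seg_image_def using F_strict_mono less.prems
      by (auto, metis less_le_trans not_less_iff_gr_or_eq order.trans)
    have "emeasure lebesgue (seg_image f x y) = emeasure lebesgue (seg_image f x s) + emeasure lebesgue (seg_image f s y)"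
      unfolding split using left right disj by (intro plus_emeasure[symmetric]) auto
    also have "\<dots> = ennreal (real b * (s - x) + real b * (y - s))"
      using left right s by (simp add: ennreal_plus)
    also have "\<dots> = ennreal (real b * (y - x))"
      by (simp add: algebra_simps)
    finally show ?thesis using split left right by auto
  qed
qed

lemma in_range_iff: "ereal \<mu> \<in> range f \<longleftrightarrow> (\<exists>z\<ge>q0. F z = \<mu>)"
proof
  assume "ereal \<mu> \<in> range f"
  then obtain z where "f z = ereal \<mu>" by auto
  then show "\<exists>z\<ge>q0. F z = \<mu>" using fin[of z] rval_def by (intro exI[of _ z]) auto
next
  assume "\<exists>z\<ge>q0. F z = \<mu>" then show "ereal \<mu> \<in> range f" using f_eq_F by (metis rangeI)
qed

lemma range_lower_bound: "ereal \<mu> \<in> range f \<Longrightarrow> F q0 \<le> \<mu>"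
  using in_range_iff F_mono by auto

lemma range_contains_tail: "\<mu> \<ge> real b * Q - q0 \<Longrightarrow> ereal \<mu> \<in> range f"
proof -
  assume \<mu>: "\<mu> \<ge> real b * Q - q0"
  define z where "z = (\<mu> + q0) / real b"
  have "z \<ge> Q" using \<mu> bpos unfolding z_def by (simp add: field_simps)
  moreover have "F z = \<mu>" using F_tail[OF \<open>z \<ge> Q\<close>] bpos unfolding z_def by simp
  ultimately show ?thesis using q0_le_Q by (intro iffD2[OF in_range_iff] exI[of _ z]) auto
qed

lemma range_below_tail:
  assumes "y \<ge> Q"
  shows "{\<mu>. ereal \<mu> \<in> range f \<and> \<mu> < real b * y - q0} = seg_image f q0 y"
proof (intro set_eqI iffI)
  have Fy: "F y = real b * y - q0" using F_tail assms by simp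
  fix \<mu>
  { assume "\<mu> \<in> {\<mu>. ereal \<mu> \<in> range f \<and> \<mu> < real b * y - q0}"
    then obtain z where z: "z \<ge> q0" "F z = \<mu>" "\<mu> < F y" using in_range_iff Fy by auto
    then have "z < y" using F_mono[of y z] q0_le_Q assms by force
    then show "\<mu> \<in> seg_image f q0 y" unfolding seg_image_def using z by auto }
  { assume "\<mu> \<in> seg_image f q0 y"
    then obtain z where z: "z \<ge> q0" "z < y" "F z = \<mu>" unfolding seg_image_def by auto
    then show "\<mu> \<in> {\<mu>. ereal \<mu> \<in> range f \<and> \<mu> < real b * y - q0}"
      using F_strict_mono[of z y] Fy in_range_iff by auto }
qed

lemma range_left_nbhd_cont:
  assumes "q0 < x" "isCont f x"
  shows "\<forall>\<^sub>F \<mu> in at_left (F x). ereal \<mu> \<in> range f"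
proof -
  obtain c where c: "\<forall>\<^sub>F y in at_left x. q0 < y \<and> F y = c + real b * y"
    using affine_left_germ[OF assms(1)] by blast
  have "\<forall>\<^sub>F y in at_left x. F y = c + real b * y" using c by (rule eventually_mono) auto
  then have Fx: "F x = c + real b * x" by (rule F_left_limit_cont[OF assms])
  obtain a where a: "a < x" "\<And>y. a < y \<Longrightarrow> y < x \<Longrightarrow> q0 < y \<and> F y = c + real b * y"
    using c unfolding eventually_at_left_field by blast
  show ?thesis unfolding eventually_at_left_field
  proof (intro exI[of _ "F x - real b * (x - a)"] conjI allI impI)
    show "F x - real b * (x - a) < F x" using a bpos by simp
    fix \<mu> assume mu: "F x - real b * (x - a) < \<mu>" "\<mu> < F x"
    define y where "y = x - (F x - \<mu>) / real b"
    have y: "a < y" "y < x" using mu bpos unfolding y_def by (auto simp: field_simps)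
    have "F y = \<mu>" using a(2)[OF y] Fx bpos unfolding y_def by (simp add: field_simps)
    then show "ereal \<mu> \<in> range f" using in_range_iff a(2)[OF y] by force
  qed
qed

text \<open>Starting from \<open>x\<close>, \<open>F\<close> follows the line of slope \<open>b\<close> through \<open>(x, F x)\<close> up to a first
  point \<open>t\<close> where it leaves it; such a point exists unless that line is the tail line.\<close>
lemma next_jump:
  assumes "q0 \<le> x" "F x - real b * x \<noteq> - q0"
  shows "\<exists>t>x. (\<forall>y. x \<le> y \<and> y < t \<longrightarrow> F y = F x + real b * (y - x)) \<and> F t \<noteq> F x + real b * (t - x)"
proof -
  define G where "G y = F y - real b * y" for y
  define T where "T = {y. x \<le> y \<and> G y \<noteq> G x}"
  define t where "t = Inf T"
  have "max Q x \<in> T"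
    unfolding T_def G_def using F_tail[of "max Q x"] assms(2) by auto
  then have T_ne: "T \<noteq> {}" by auto
  have T_bdd: "bdd_below T" unfolding T_def bdd_below_def by auto
  have before_t: "G y = G x" if "x \<le> y" "y < t" for y
  proof (rule ccontr)
    assume "G y \<noteq> G x"
    then have "t \<le> y" unfolding t_def using that T_bdd by (intro cInf_lower) (auto simp: T_def)
    then show False using that by simp
  qed
  obtain w where w: "w > x" "\<And>y. x \<le> y \<and> y < w \<Longrightarrow> F y = F x + real b * (y - x)"
    using affine_right_germ[OF assms(1)] by blast
  have "w \<le> t" unfolding t_def
  proof (rule cInf_greatest[OF T_ne])
    fix y assume "y \<in> T"
    then show "w \<le> y" unfolding T_def G_def using w by (force simp: algebra_simps)
  qed
  then have xt: "x < t" using w by simp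
  have "G t \<noteq> G x"
  proof
    assume eq: "G t = G x"
    obtain w' where w': "w' > t" "\<And>y. t \<le> y \<and> y < w' \<Longrightarrow> F y = F t + real b * (y - t)"
      using affine_right_germ[of t] assms(1) xt by auto
    have "w' \<le> t" unfolding t_def
    proof (rule cInf_greatest[OF T_ne])
      fix y assume y: "y \<in> T"
      show "w' \<le> y"
      proof (rule ccontr)
        assume "\<not> w' \<le> y"
        then have "G y = G t"
          using before_t[of y] w'(2)[of y] y unfolding T_def G_def by (force simp: algebra_simps)
        then show False using eq y before_t[of y] unfolding T_def by auto
      qed
    qed
    then show False using w' by simp
  qed
  then show ?thesis
    using xt before_t unfolding G_def by (intro exI[of _ t]) (auto simp: algebra_simps)
qed

lemma jump_up:
  assumes "q0 \<le> x" "x < t" and line: "\<And>y. x \<le> y \<Longrightarrow> y < t \<Longrightarrow> F y = c + real b * y"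
    and jump: "F t \<noteq> c + real b * t"
  shows "\<not> isCont f t" and "c + real b * t < F t"
proof -
  have "\<forall>\<^sub>F y in at_left t. x < y" using assms(2) eventually_at_left_field by blast
  then have near_t: "\<forall>\<^sub>F y in at_left t. x < y \<and> y < t"
    using eventually_at_left_less[of t] by eventually_elim auto
  then have on_line: "\<forall>\<^sub>F y in at_left t. F y = c + real b * y"
    by eventually_elim (simp add: line)
  show "\<not> isCont f t"
  proof
    assume "isCont f t"
    moreover have "q0 < t" using assms(1,2) by simp
    ultimately have "F t = c + real b * t" using F_left_limit_cont on_line by blast
    then show False using jump by simp
  qed
  have "c + real b * t \<le> F t"
  proof (rule tendsto_upperbound)
    show "((\<lambda>y. c + real b * y) \<longlongrightarrow> c + real b * t) (at_left t)"
      by (intro tendsto_intros)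
    show "\<forall>\<^sub>F y in at_left t. c + real b * y \<le> F t"
      using near_t
    proof eventually_elim
      case (elim y)
      then have "F y \<le> F t" using F_mono[of y t] assms(1) by simp
      then show ?case using line[of y] elim by simp
    qed
  qed simp
  then show "c + real b * t < F t" using jump by simp
qed

lemma jump_gap:
  assumes "q0 \<le> x" "x < t" and line: "\<And>y. x \<le> y \<Longrightarrow> y < t \<Longrightarrow> F y = c + real b * y"
    and jump: "F t \<noteq> c + real b * t"
  shows "ereal (c + real b * t) \<notin> range f"
    and "\<forall>\<^sub>F \<mu> in at_left (c + real b * t). ereal \<mu> \<in> range f"
proof -
  define l where "l = c + real b * t"
  have l_less: "l < F t" using jump_up(2)[OF assms] unfolding l_def .
  show "ereal (c + real b * t) \<notin> range f"
  proof
    assume "ereal (c + real b * t) \<in> range f"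
    then obtain z where z: "z \<ge> q0" "F z = l" unfolding in_range_iff l_def by blast
    consider "t \<le> z" | "x \<le> z" "z < t" | "z < x" by linarith
    then show False
    proof cases
      case 1 then show False using F_mono[of t z] z l_less assms(1,2) by simp
    next
      case 2 then show False using line[of z] z bpos unfolding l_def by simp
    next
      case 3
      then have "F z \<le> F x" using F_mono[of z x] z by simp
      moreover have "F x < l" using line[of x] assms(2) bpos unfolding l_def by simp
      ultimately show False using z by simp
    qed
  qed
  show "\<forall>\<^sub>F \<mu> in at_left (c + real b * t). ereal \<mu> \<in> range f"
    unfolding eventually_at_left_field
  proof (intro exI[of _ "l - real b * (t - x)"] conjI allI impI)
    show "l - real b * (t - x) < c + real b * t" using assms(2) bpos unfolding l_def by simp
    fix \<mu> assume \<mu>: "l - real b * (t - x) < \<mu>" "\<mu> < c + real b * t"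
    define y where "y = t - (l - \<mu>) / real b"
    have y: "x < y" "y < t" using \<mu> bpos unfolding y_def l_def by (auto simp: field_simps)
    have "F y = \<mu>" using line[of y] y bpos unfolding y_def l_def by (simp add: field_simps)
    then show "ereal \<mu> \<in> range f" using y assms(1) unfolding in_range_iff by (intro exI[of _ y]) auto
  qed
qed

lemma nonintegral_gap:
  assumes "q0 \<le> x" "F x - real b * x \<notin> \<int>" "q0 \<in> \<int>"
    and disc: "\<And>t. \<not> isCont f t \<Longrightarrow> \<exists>k::int. t = of_int k / real b"
  shows "\<exists>l>F x. l \<notin> \<int> \<and> ereal l \<notin> range f \<and> (\<forall>\<^sub>F \<mu> in at_left l. ereal \<mu> \<in> range f)"
proof -
  define c where "c = F x - real b * x"
  have "F x - real b * x \<noteq> - q0" using assms(2,3) by (metis Ints_minus)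
  then obtain t where t: "x < t" "\<And>y. x \<le> y \<Longrightarrow> y < t \<Longrightarrow> F y = c + real b * y"
    "F t \<noteq> c + real b * t"
    using next_jump[OF assms(1)] unfolding c_def by (auto simp: algebra_simps)
  note gap = jump_gap[OF assms(1) t]
  obtain k :: int where "t = of_int k / real b" using disc[OF jump_up(1)[OF assms(1) t]] by blast
  then have "real b * t = of_int k" using bpos by simp
  then have "c + real b * t \<notin> \<int>" using assms(2) unfolding c_def by (metis Ints_diff Ints_of_int add_diff_cancel_right')
  moreover have "F x < c + real b * t" using t(1) bpos unfolding c_def by simp
  ultimately show ?thesis using gap by blast
qed

end

locale phiZ_conj =
  fixes b d :: nat and \<phi> \<psi> :: "nat \<Rightarrow> real \<Rightarrow> ereal"
  assumes b2: "b \<ge> 2" and d1: "d \<ge> 1" and phiZ: "Phi_Z b d \<phi>" and conj: "conj_family d \<phi> \<psi>"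
begin

lemma bpos: "real b > 0"
  using b2 by simp

lemma component_exists: "i \<in> {1..d} \<Longrightarrow> \<exists>q::int. \<exists>S Q. slope_fun b (\<phi> i) (real_of_int q) S Q"
proof -
  assume i: "i \<in> {1..d}"
  from phiZ i obtain q :: int where tc: "tail_cond b (\<phi> i) (of_int q)" unfolding Phi_Z_def by blast
  from phiZ i have props: "no_pinf (\<phi> i) \<and> strictly_incr (\<phi> i) \<and> right_cont (\<phi> i)"
    unfolding Phi_Z_def Phi_def by blast
  from tc obtain S Q where S: "finite S"
      "\<forall>x y. real_of_int q < x \<and> x \<le> y \<and> (\<forall>s\<in>S. \<not> (x \<le> s \<and> s \<le> y)) \<longrightarrow>
         \<phi> i y = \<phi> i x + ereal (real b * (y - x))"
    and Q: "\<forall>q'\<ge>Q. \<phi> i q' = ereal (real b * q' - of_int q)"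
    and fin: "\<forall>x. \<phi> i x \<noteq> -\<infinity> \<longleftrightarrow> of_int q \<le> x"
    unfolding tail_cond_def by blast
  have "slope_fun b (\<phi> i) (of_int q) S (max Q (of_int q))"
    using b2 props S Q fin unfolding no_pinf_def strictly_incr_def right_cont_def
    by unfold_locales auto
  then show ?thesis by blast
qed

definition qi where "qi i = (SOME q::int. \<exists>S Q. slope_fun b (\<phi> i) (real_of_int q) S Q)"
definition Si where "Si i = (SOME S. \<exists>Q. slope_fun b (\<phi> i) (real_of_int (qi i)) S Q)"
definition Qi where "Qi i = (SOME Q. slope_fun b (\<phi> i) (real_of_int (qi i)) (Si i) Q)"

lemma component: "i \<in> {1..d} \<Longrightarrow> slope_fun b (\<phi> i) (real_of_int (qi i)) (Si i) (Qi i)"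
proof -
  assume i: "i \<in> {1..d}"
  have "\<exists>S Q. slope_fun b (\<phi> i) (real_of_int (qi i)) S Q"
    using someI_ex[OF component_exists[OF i]] unfolding qi_def .
  then have "\<exists>Q. slope_fun b (\<phi> i) (real_of_int (qi i)) (Si i) Q" unfolding Si_def by (rule someI_ex)
  then show ?thesis unfolding Qi_def by (rule someI_ex)
qed

lemma disc_on_grid: "i \<in> {1..d} \<Longrightarrow> \<not> isCont (\<phi> i) x \<Longrightarrow> \<exists>k::int. x = of_int k / real b"
  using phiZ unfolding Phi_Z_def by blast

lemma phi_antitone: assumes "1 \<le> i" "i \<le> i'" "i' \<le> d" shows "\<phi> i' x \<le> \<phi> i x"
  using assms(2,3)
proof (induction i' rule: dec_induct)
  case (step n)
  have "\<phi> (Suc n) x \<le> \<phi> n x" using phiZ assms(1) step unfolding Phi_Z_def Phi_def by simp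
  moreover have "\<phi> n x \<le> \<phi> i x" using step by simp
  ultimately show ?case by (rule order.trans)
qed simp

lemma psi_props: "j \<in> {1..d} \<Longrightarrow> no_pinf (\<psi> j) \<and> strictly_incr (\<psi> j) \<and> right_cont (\<psi> j)"
  using conj unfolding conj_family_def by blast

lemma psi_monotone: assumes "1 \<le> j" "j \<le> j'" "j' \<le> d" shows "\<psi> j x \<le> \<psi> j' x"
  using assms(2,3)
proof (induction j' rule: dec_induct)
  case (step n)
  have "\<psi> j x \<le> \<psi> n x" using step by simp
  moreover have "\<psi> n x \<le> \<psi> (Suc n) x" using conj assms(1) step unfolding conj_family_def by simp
  ultimately show ?case by (rule order.trans)
qed simp

lemma conj_count: "card {i\<in>{1..d}. \<phi> i q = ereal \<mu>} = card {j\<in>{1..d}. \<psi> j \<mu> = ereal q}"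
  using conj unfolding conj_family_def by blast

lemma psi_mono: "j \<in> {1..d} \<Longrightarrow> x \<le> y \<Longrightarrow> \<psi> j x \<le> \<psi> j y"
  using psi_props[of j] unfolding strictly_incr_def mono_def by blast

lemma psi_finite: "j \<in> {1..d} \<Longrightarrow> \<psi> j \<mu> \<noteq> -\<infinity> \<Longrightarrow> \<psi> j \<mu> = ereal (real_of_ereal (\<psi> j \<mu>))"
  using psi_props[of j] unfolding no_pinf_def by (cases "\<psi> j \<mu>") auto

lemma phi_inj:
  assumes i: "i \<in> {1..d}" and "\<phi> i q = ereal \<mu>" "\<phi> i q' = ereal \<mu>"
  shows "q = q'"
proof (rule ccontr)
  assume "q \<noteq> q'"
  then consider "q < q'" | "q' < q" by linarith
  then show False
    using slope_fun.smono[OF component[OF i]] assms(2,3) by cases force+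
qed

lemma exists_phi: "j \<in> {1..d} \<Longrightarrow> \<psi> j \<mu> = ereal z \<Longrightarrow> \<exists>i\<in>{1..d}. \<phi> i z = ereal \<mu>"
proof -
  assume "j \<in> {1..d}" "\<psi> j \<mu> = ereal z"
  then have "card {j\<in>{1..d}. \<psi> j \<mu> = ereal z} > 0" by (intro card_gt_0_iff[THEN iffD2]) auto
  then have "card {i\<in>{1..d}. \<phi> i z = ereal \<mu>} > 0" using conj_count by simp
  then show ?thesis unfolding card_gt_0_iff by blast
qed

lemma exists_psi: "i \<in> {1..d} \<Longrightarrow> \<phi> i z = ereal \<mu> \<Longrightarrow> \<exists>j\<in>{1..d}. \<psi> j \<mu> = ereal z"
proof -
  assume "i \<in> {1..d}" "\<phi> i z = ereal \<mu>"
  then have "card {i\<in>{1..d}. \<phi> i z = ereal \<mu>} > 0" by (intro card_gt_0_iff[THEN iffD2]) auto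
  then have "card {j\<in>{1..d}. \<psi> j \<mu> = ereal z} > 0" using conj_count by simp
  then show ?thesis unfolding card_gt_0_iff by blast
qed

definition present :: "real \<Rightarrow> nat set" where
  "present \<mu> = {i\<in>{1..d}. ereal \<mu> \<in> range (\<phi> i)}"

text \<open>Summing the conjugacy relation over all \<open>q\<close>: the number of \<open>j\<close> with \<open>\<psi>\<^sub>j(\<mu>)\<close> finite
  is the number of components attaining \<open>\<mu>\<close>.\<close>
lemma card_psi_finite: "card {j\<in>{1..d}. \<psi> j \<mu> \<noteq> -\<infinity>} = card (present \<mu>)"
proof -
  define Qs where "Qs = (\<lambda>j. real_of_ereal (\<psi> j \<mu>)) ` {1..d}"
  have fQ: "finite Qs" unfolding Qs_def by simp
  have present_UN: "present \<mu> = (\<Union>q\<in>Qs. {i\<in>{1..d}. \<phi> i q = ereal \<mu>})"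
  proof (intro set_eqI iffI)
    fix i assume "i \<in> present \<mu>"
    then obtain z where i: "i \<in> {1..d}" "\<phi> i z = ereal \<mu>" unfolding present_def by auto
    obtain j where "j \<in> {1..d}" "\<psi> j \<mu> = ereal z" using exists_psi[OF i] by blast
    then have "z \<in> Qs" unfolding Qs_def by force
    then show "i \<in> (\<Union>q\<in>Qs. {i\<in>{1..d}. \<phi> i q = ereal \<mu>})" using i by auto
  next
    fix i assume "i \<in> (\<Union>q\<in>Qs. {i\<in>{1..d}. \<phi> i q = ereal \<mu>})"
    then show "i \<in> present \<mu>" unfolding present_def by (metis (mono_tags, lifting) UN_E mem_Collect_eq rangeI)
  qed
  have finite_UN: "{j\<in>{1..d}. \<psi> j \<mu> \<noteq> -\<infinity>} = (\<Union>q\<in>Qs. {j\<in>{1..d}. \<psi> j \<mu> = ereal q})"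
  proof (intro set_eqI iffI)
    fix j assume "j \<in> {j\<in>{1..d}. \<psi> j \<mu> \<noteq> -\<infinity>}"
    then show "j \<in> (\<Union>q\<in>Qs. {j\<in>{1..d}. \<psi> j \<mu> = ereal q})"
      using psi_finite unfolding Qs_def by blast
  qed auto
  have "card (present \<mu>) = (\<Sum>q\<in>Qs. card {i\<in>{1..d}. \<phi> i q = ereal \<mu>})"
    unfolding present_UN using phi_inj by (intro card_UN_disjoint[OF fQ]) auto
  also have "\<dots> = (\<Sum>q\<in>Qs. card {j\<in>{1..d}. \<psi> j \<mu> = ereal q})" using conj_count by simp
  also have "\<dots> = card {j\<in>{1..d}. \<psi> j \<mu> \<noteq> -\<infinity>}"
    unfolding finite_UN by (intro card_UN_disjoint[symmetric, OF fQ]) auto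
  finally show ?thesis by simp
qed

lemma card_present_mono: "\<mu> \<le> l \<Longrightarrow> card (present \<mu>) \<le> card (present l)"
proof -
  assume "\<mu> \<le> l"
  then have "{j\<in>{1..d}. \<psi> j \<mu> \<noteq> -\<infinity>} \<subseteq> {j\<in>{1..d}. \<psi> j l \<noteq> -\<infinity>}"
    using psi_mono by fastforce
  then show ?thesis unfolding card_psi_finite[symmetric] by (intro card_mono) auto
qed

text \<open>Since the \<open>\<psi>\<^sub>j\<close> increase with \<open>j\<close>, the indices with \<open>\<psi>\<^sub>j(\<mu>) = -\<infinity>\<close> form an initial
  segment, whose length is the number of components missing \<open>\<mu>\<close>.\<close>
lemma psi_undefined_initial:
  "{j\<in>{1..d}. \<psi> j \<mu> = -\<infinity>} = {1..card {i\<in>{1..d}. ereal \<mu> \<notin> range (\<phi> i)}}"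
proof -
  define A where "A = {j\<in>{1..d}. \<psi> j \<mu> = -\<infinity>}"
  have "A = {1..card A}"
  proof (rule downward_closed_initial_segment)
    show "A \<subseteq> {1..d}" unfolding A_def by auto
    fix a a' assume "a \<in> A" "1 \<le> a'" "a' \<le> a"
    then show "a' \<in> A" using psi_monotone[of a' a \<mu>] unfolding A_def by auto
  qed
  moreover have "card A = card {i\<in>{1..d}. ereal \<mu> \<notin> range (\<phi> i)}"
    using card_filter_split[where d=d and P="\<lambda>j. \<psi> j \<mu> \<noteq> -\<infinity>"]
      card_filter_split[where d=d and P="\<lambda>i. ereal \<mu> \<in> range (\<phi> i)"]
      card_psi_finite[of \<mu>]
    unfolding A_def present_def by simp
  ultimately show ?thesis unfolding A_def by simp
qed

text \<open>A window \<open>[lo, hi[\<close> outside of which nothing happens: below \<open>lo\<close> no component has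
  values, above \<open>hi\<close> all components are onto.\<close>
definition lo where "lo = Min ((\<lambda>i. rval (\<phi> i) (qi i)) ` {1..d})"
definition hi where "hi = Max ((\<lambda>i. real b * Qi i - qi i) ` {1..d})"

lemma range_above_lo: "i \<in> {1..d} \<Longrightarrow> ereal \<mu> \<in> range (\<phi> i) \<Longrightarrow> lo \<le> \<mu>"
  using slope_fun.range_lower_bound[OF component] unfolding lo_def
  by (meson Min_le finite_atLeastAtMost finite_imageI image_eqI order.trans)

lemma range_from_hi: "i \<in> {1..d} \<Longrightarrow> hi \<le> \<mu> \<Longrightarrow> ereal \<mu> \<in> range (\<phi> i)"
  using slope_fun.range_contains_tail[OF component] unfolding hi_def
  by (meson Max_ge finite_atLeastAtMost finite_imageI image_eqI order.trans)

lemma hi_ge: "i \<in> {1..d} \<Longrightarrow> real b * Qi i - qi i \<le> hi"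
  unfolding hi_def by (rule Max_ge) auto

lemma lo_le_hi: "lo \<le> hi"
proof -
  have one: "1 \<in> {1..d}" using d1 by simp
  show ?thesis using range_above_lo[OF one range_from_hi[OF one order.refl]] .
qed

lemma psi_below_lo: "\<mu> < lo \<Longrightarrow> j \<in> {1..d} \<Longrightarrow> \<psi> j \<mu> = -\<infinity>"
proof -
  assume "\<mu> < lo" "j \<in> {1..d}"
  then have "present \<mu> = {}" using range_above_lo unfolding present_def by force
  then have "{j\<in>{1..d}. \<psi> j \<mu> \<noteq> -\<infinity>} = {}" using card_psi_finite[of \<mu>] by simp
  then show ?thesis using \<open>j \<in> {1..d}\<close> by blast
qed

lemma psi_from_hi: "hi \<le> \<mu> \<Longrightarrow> j \<in> {1..d} \<Longrightarrow> \<psi> j \<mu> \<noteq> -\<infinity>"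
proof -
  assume "hi \<le> \<mu>" "j \<in> {1..d}"
  then have "present \<mu> = {1..d}" using range_from_hi unfolding present_def by force
  then have "card {j\<in>{1..d}. \<psi> j \<mu> \<noteq> -\<infinity>} = card {1..d}" using card_psi_finite[of \<mu>] by simp
  then have "{j\<in>{1..d}. \<psi> j \<mu> \<noteq> -\<infinity>} = {1..d}" by (intro card_subset_eq) auto
  then show ?thesis using \<open>j \<in> {1..d}\<close> by blast
qed

text \<open>Finite values of \<open>\<psi>\<^sub>j\<close> are arguments of some \<open>\<phi>\<^sub>i\<close>, hence bounded below.\<close>
lemma psi_lower_bound: "j \<in> {1..d} \<Longrightarrow> \<psi> j \<mu> \<noteq> -\<infinity> \<Longrightarrow> ereal (Min (real_of_int ` qi ` {1..d})) \<le> \<psi> j \<mu>"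
proof -
  assume j: "j \<in> {1..d}" "\<psi> j \<mu> \<noteq> -\<infinity>"
  define z where "z = real_of_ereal (\<psi> j \<mu>)"
  have e: "\<psi> j \<mu> = ereal z" using psi_finite[OF j] unfolding z_def .
  obtain i where i: "i \<in> {1..d}" "\<phi> i z = ereal \<mu>" using exists_phi[OF j(1) e] by blast
  have "qi i \<le> z" using slope_fun.fin[OF component[OF i(1)], of z] i(2) by simp
  moreover have "Min (real_of_int ` qi ` {1..d}) \<le> qi i" using i(1) by (intro Min_le) auto
  ultimately show ?thesis using e by simp
qed

definition r where "r j = Inf {\<mu>. \<psi> j \<mu> \<noteq> -\<infinity>}"

text \<open>\<open>\<psi>\<^sub>j\<close> is finite exactly on \<open>[r j, \<infinity>[\<close>; the left end is included by right continuity,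
  as \<open>\<psi>\<^sub>j\<close> stays bounded below where it is finite.\<close>
lemma r_props:
  assumes j: "j \<in> {1..d}"
  shows "lo \<le> r j \<and> r j \<le> hi \<and> (\<forall>\<mu>. \<psi> j \<mu> \<noteq> -\<infinity> \<longleftrightarrow> r j \<le> \<mu>)"
proof -
  define E where "E = {\<mu>. \<psi> j \<mu> \<noteq> -\<infinity>}"
  have hi_E: "hi \<in> E" unfolding E_def using psi_from_hi[OF _ j] by simp
  have lb: "\<And>\<mu>. \<mu> \<in> E \<Longrightarrow> lo \<le> \<mu>" unfolding E_def using psi_below_lo[OF _ j] by force
  then have bdd: "bdd_below E" unfolding bdd_below_def by auto
  have rE: "r j = Inf E" unfolding r_def E_def ..
  have above: "\<mu> \<in> E" if "r j < \<mu>" for \<mu>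
  proof -
    have "\<exists>e\<in>E. e < \<mu>" using cInf_less_iff[OF _ bdd, of \<mu>] hi_E that rE by auto
    then obtain e where e: "e \<in> E" "e < \<mu>" by blast
    then have "\<psi> j e \<le> \<psi> j \<mu>" "\<psi> j e \<noteq> -\<infinity>" using psi_mono[OF j] unfolding E_def by auto
    then show ?thesis unfolding E_def by (metis ereal_infty_less_eq(2) mem_Collect_eq)
  qed
  have "r j \<in> E"
  proof -
    have "((\<psi> j) \<longlongrightarrow> \<psi> j (r j)) (at_right (r j))"
      using psi_props[OF j] unfolding right_cont_def by (simp add: continuous_within)
    moreover have "\<forall>\<^sub>F y in at_right (r j). ereal (Min (real_of_int ` qi ` {1..d})) \<le> \<psi> j y"
      using eventually_at_right_less[of "r j"]
      by eventually_elim (use above psi_lower_bound[OF j] in \<open>auto simp: E_def\<close>)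
    ultimately have "ereal (Min (real_of_int ` qi ` {1..d})) \<le> \<psi> j (r j)"
      by (rule tendsto_lowerbound) simp
    then show ?thesis unfolding E_def by auto
  qed
  have "\<psi> j \<mu> \<noteq> -\<infinity> \<longleftrightarrow> r j \<le> \<mu>" for \<mu>
  proof
    assume "\<psi> j \<mu> \<noteq> -\<infinity>"
    then show "r j \<le> \<mu>" unfolding rE using bdd by (intro cInf_lower) (auto simp: E_def)
  next
    assume "r j \<le> \<mu>"
    then show "\<psi> j \<mu> \<noteq> -\<infinity>" using above \<open>r j \<in> E\<close> unfolding E_def by (cases "r j = \<mu>") auto
  qed
  moreover have "r j \<le> hi" unfolding rE using hi_E bdd by (rule cInf_lower)
  moreover have "lo \<le> r j" unfolding rE using hi_E lb by (intro cInf_greatest) auto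
  ultimately show ?thesis by blast
qed

text \<open>Since \<open>\<phi>\<^sub>1\<close> dominates all components, the defining condition of \<open>\<mu>\<^sub>1\<^sub>,\<^sub>j\<close> just says
  that \<open>\<psi>\<^sub>j(\<mu>)\<close> is finite; so \<open>\<mu>\<^sub>1\<^sub>,\<^sub>j = r j\<close>.\<close>
lemma mu1_eq_r: assumes j: "j \<in> {1..d}" shows "mu1 d \<phi> \<psi> j = r j"
proof -
  have "ext_minf (\<phi> 1) (\<psi> j \<mu>) > ereal \<mu> \<or>
      (ext_minf (\<phi> 1) (\<psi> j \<mu>) = ereal \<mu> \<and>
        card {i'\<in>{1..1}. ext_minf (\<phi> i') (\<psi> j \<mu>) = ereal \<mu>}
          \<le> card {j'\<in>{1..j}. \<psi> j' \<mu> = \<psi> j \<mu>})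
      \<longleftrightarrow> \<psi> j \<mu> \<noteq> -\<infinity>" for \<mu>
  proof
    assume "\<psi> j \<mu> \<noteq> -\<infinity>"
    then obtain z where z: "\<psi> j \<mu> = ereal z" using psi_finite[OF j] by blast
    obtain i where i: "i \<in> {1..d}" "\<phi> i z = ereal \<mu>" using exists_phi[OF j z] by blast
    have "\<phi> i z \<le> \<phi> 1 z" using i(1) by (intro phi_antitone) auto
    then have le: "ereal \<mu> \<le> ext_minf (\<phi> 1) (\<psi> j \<mu>)" using i(2) z unfolding ext_minf_def by simp
    have "card {i'\<in>{1..1::nat}. ext_minf (\<phi> i') (\<psi> j \<mu>) = ereal \<mu>} \<le> card {1..1::nat}"
      by (rule card_mono) auto
    moreover have "j \<in> {j'\<in>{1..j}. \<psi> j' \<mu> = \<psi> j \<mu>}" using j by simp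
    then have "card {j'\<in>{1..j}. \<psi> j' \<mu> = \<psi> j \<mu>} > 0" by (intro card_gt_0_iff[THEN iffD2]) auto
    ultimately show "ext_minf (\<phi> 1) (\<psi> j \<mu>) > ereal \<mu> \<or>
      (ext_minf (\<phi> 1) (\<psi> j \<mu>) = ereal \<mu> \<and>
        card {i'\<in>{1..1}. ext_minf (\<phi> i') (\<psi> j \<mu>) = ereal \<mu>}
          \<le> card {j'\<in>{1..j}. \<psi> j' \<mu> = \<psi> j \<mu>})"
      using le by (auto simp: le_less)
  qed (auto simp: ext_minf_def)
  then show ?thesis unfolding mu1_def r_def by simp
qed

text \<open>A component whose range starts at \<open>l\<close> (it contains \<open>l\<close> but no left neighbourhood of \<open>l\<close>)
  attains \<open>l\<close> at its starting point or at a discontinuity, in both cases at a point of \<open>\<int>/b\<close>.\<close>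
lemma component_start_on_grid:
  assumes i: "i \<in> {1..d}" and l: "ereal l \<in> range (\<phi> i)"
    and start: "\<not> (\<forall>\<^sub>F \<mu> in at_left l. ereal \<mu> \<in> range (\<phi> i))"
  shows "\<exists>x. real_of_int (qi i) \<le> x \<and> rval (\<phi> i) x = l \<and> (\<exists>k::int. x = of_int k / real b)"
proof -
  obtain x :: real where x: "x \<ge> qi i" "rval (\<phi> i) x = l"
    using slope_fun.in_range_iff[OF component[OF i]] l by blast
  have "\<exists>k::int. x = of_int k / real b"
  proof (cases "x = qi i")
    case True then show ?thesis using bpos by (intro exI[of _ "int b * qi i"]) simp
  next
    case False
    then have "qi i < x" using x by simp
    then show ?thesis
      using slope_fun.range_left_nbhd_cont[OF component[OF i]] x start disc_on_grid[OF i] by blast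
  qed
  then show ?thesis using x by blast
qed

lemma left_end_on_grid:
  assumes "\<forall>\<^sub>F \<mu> in at_left l. \<not> present l \<subseteq> present \<mu>"
  shows "\<exists>i x. i \<in> {1..d} \<and> real_of_int (qi i) \<le> x \<and> rval (\<phi> i) x = l \<and> (\<exists>k::int. x = of_int k / real b)"
proof -
  have "\<exists>i\<in>present l. \<not> (\<forall>\<^sub>F \<mu> in at_left l. ereal \<mu> \<in> range (\<phi> i))"
  proof (rule ccontr)
    assume "\<not> ?thesis"
    then have "\<forall>\<^sub>F \<mu> in at_left l. \<forall>i\<in>present l. ereal \<mu> \<in> range (\<phi> i)"
      by (intro eventually_ball_finite) (auto simp: present_def)
    with assms have "\<forall>\<^sub>F \<mu> in at_left l. False"
      by eventually_elim (auto simp: present_def)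
    then show False by simp
  qed
  then obtain i where i: "i \<in> {1..d}" "ereal l \<in> range (\<phi> i)"
    "\<not> (\<forall>\<^sub>F \<mu> in at_left l. ereal \<mu> \<in> range (\<phi> i))"
    unfolding present_def by blast
  then show ?thesis using component_start_on_grid[OF i] by blast
qed

definition bad_points :: "(nat \<times> real) set" where
  "bad_points = {(i, x). i \<in> {1..d} \<and> (\<exists>k::int. x = of_int k / real b) \<and> real_of_int (qi i) \<le> x
                        \<and> rval (\<phi> i) x \<notin> \<int>}"

text \<open>A bad point lies before the tail (where all grid values are integers), so there are
  only finitely many.\<close>
lemma finite_bad_points: "finite bad_points"
proof (rule finite_subset)
  show "bad_points \<subseteq> (\<Union>i\<in>{1..d}. (\<lambda>k. (i, of_int k / real b)) ` {int b * qi i .. \<lfloor>real b * Qi i\<rfloor>})"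
  proof
    fix p assume "p \<in> bad_points"
    then obtain i x k where p: "p = (i, x)" "i \<in> {1..d}" "x = of_int k / real b"
      "real_of_int (qi i) \<le> x" "rval (\<phi> i) x \<notin> \<int>"
      unfolding bad_points_def by blast
    have bx: "real b * x = of_int k" using p(3) bpos by simp
    have "x < Qi i"
    proof (rule ccontr)
      assume "\<not> x < Qi i"
      then have "rval (\<phi> i) x = of_int (k - qi i)"
        using slope_fun.F_tail[OF component[OF p(2)]] bx by simp
      then show False using p(5) by (metis Ints_of_int)
    qed
    then have "real b * x < real b * Qi i" using bpos by simp
    then have "k \<le> \<lfloor>real b * Qi i\<rfloor>" using bx by (simp add: le_floor_iff)
    moreover have "real b * qi i \<le> real b * x" using p(4) bpos by simp
    then have "int b * qi i \<le> k" using bx by (metis of_int_le_iff of_int_mult of_int_of_nat_eq)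
    ultimately have "p \<in> (\<lambda>k. (i, of_int k / real b)) ` {int b * qi i .. \<lfloor>real b * Qi i\<rfloor>}"
      using p(1,3) by (intro image_eqI[of _ _ k]) auto
    then show "p \<in> (\<Union>i\<in>{1..d}. (\<lambda>k. (i, of_int k / real b)) ` {int b * qi i .. \<lfloor>real b * Qi i\<rfloor>})"
      using p(2) by blast
  qed
qed auto

text \<open>Integrality of values at grid points: otherwise take a bad point with maximal value \<open>m\<close>;
  the component has a non-integral gap end \<open>l > m\<close>, at which some other component starts;
  that start lies on the grid, giving a bad point with value \<open>l > m\<close>.\<close>
lemma grid_values_integral:
  assumes i: "i \<in> {1..d}" and grid: "\<exists>k::int. x = of_int k / real b" and start: "real_of_int (qi i) \<le> x"
  shows "rval (\<phi> i) x \<in> \<int>"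
proof (rule ccontr)
  assume "rval (\<phi> i) x \<notin> \<int>"
  then have "(i, x) \<in> bad_points" unfolding bad_points_def using i grid start by simp
  define V where "V = (\<lambda>(i, x). rval (\<phi> i) x) ` bad_points"
  have V: "finite V" "V \<noteq> {}" unfolding V_def using finite_bad_points \<open>(i, x) \<in> bad_points\<close> by auto
  have "Max V \<in> V" using V by simp
  then obtain i0 x0 where p0: "(i0, x0) \<in> bad_points" "rval (\<phi> i0) x0 = Max V"
    unfolding V_def by auto
  then obtain k0 :: int where i0: "i0 \<in> {1..d}" "x0 = of_int k0 / real b" "real_of_int (qi i0) \<le> x0"
    "rval (\<phi> i0) x0 \<notin> \<int>"
    unfolding bad_points_def by blast
  have "rval (\<phi> i0) x0 - real b * x0 \<notin> \<int>"
  proof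
    assume "rval (\<phi> i0) x0 - real b * x0 \<in> \<int>"
    then have "rval (\<phi> i0) x0 - real b * x0 + of_int k0 \<in> \<int>" by (intro Ints_add) auto
    moreover have "real b * x0 = of_int k0" using i0(2) bpos by simp
    ultimately show False using i0(4) by simp
  qed
  then obtain l where l: "l > Max V" "l \<notin> \<int>" "ereal l \<notin> range (\<phi> i0)"
    "\<forall>\<^sub>F \<mu> in at_left l. ereal \<mu> \<in> range (\<phi> i0)"
    using slope_fun.nonintegral_gap[OF component[OF i0(1)] i0(3)] disc_on_grid[OF i0(1)] p0(2) by auto
  have "\<forall>\<^sub>F \<mu> in at_left l. \<not> present l \<subseteq> present \<mu>"
    using l(4) eventually_at_left_less[of l]
  proof eventually_elim
    case (elim \<mu>)
    have "i0 \<in> present \<mu>" "i0 \<notin> present l" using elim i0(1) l(3) unfolding present_def by auto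
    show ?case
    proof
      assume "present l \<subseteq> present \<mu>"
      then have "card (present l) < card (present \<mu>)"
        using \<open>i0 \<in> present \<mu>\<close> \<open>i0 \<notin> present l\<close> by (intro psubset_card_mono) (auto simp: present_def)
      then show False using card_present_mono[of \<mu> l] elim by simp
    qed
  qed
  then obtain i1 x1 where "i1 \<in> {1..d}" "real_of_int (qi i1) \<le> x1" "rval (\<phi> i1) x1 = l"
    "\<exists>k::int. x1 = of_int k / real b"
    using left_end_on_grid by blast
  then have "l \<in> V" unfolding V_def bad_points_def using l(2) by force
  then show False using l(1) V(1) by (meson Max_ge leD)
qed

text \<open>At \<open>r j\<close> the number of attaining components jumps, so \<open>r j\<close> is a grid value, an integer.\<close>
lemma r_integral: assumes j: "j \<in> {1..d}" shows "r j \<in> \<int>"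
proof -
  define l where "l = r j"
  have finite_iff: "\<psi> j \<mu> \<noteq> -\<infinity> \<longleftrightarrow> l \<le> \<mu>" for \<mu> using r_props[OF j] unfolding l_def by blast
  have "\<forall>\<^sub>F \<mu> in at_left l. \<not> present l \<subseteq> present \<mu>"
    using eventually_at_left_less[of l]
  proof eventually_elim
    case (elim \<mu>)
    have "{j'\<in>{1..d}. \<psi> j' \<mu> \<noteq> -\<infinity>} \<subseteq> {j'\<in>{1..d}. \<psi> j' l \<noteq> -\<infinity>}"
    proof
      fix j' assume j': "j' \<in> {j'\<in>{1..d}. \<psi> j' \<mu> \<noteq> -\<infinity>}"
      then have "\<psi> j' \<mu> \<le> \<psi> j' l" using psi_mono[of j' \<mu> l] elim by simp
      then show "j' \<in> {j'\<in>{1..d}. \<psi> j' l \<noteq> -\<infinity>}"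
        using j' by (metis (mono_tags, lifting) ereal_infty_less_eq(2) mem_Collect_eq)
    qed
    moreover have "j \<in> {j'\<in>{1..d}. \<psi> j' l \<noteq> -\<infinity>}" "j \<notin> {j'\<in>{1..d}. \<psi> j' \<mu> \<noteq> -\<infinity>}"
      using finite_iff[of l] finite_iff[of \<mu>] elim j by auto
    ultimately have less: "card (present \<mu>) < card (present l)"
      unfolding card_psi_finite[symmetric] by (intro psubset_card_mono) auto
    show ?case
    proof
      assume "present l \<subseteq> present \<mu>"
      then have "card (present l) \<le> card (present \<mu>)" by (intro card_mono) (auto simp: present_def)
      then show False using less by simp
    qed
  qed
  then obtain i x where i: "i \<in> {1..d}" "real_of_int (qi i) \<le> x" "rval (\<phi> i) x = l"
    "\<exists>k::int. x = of_int k / real b"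
    using left_end_on_grid by blast
  have "rval (\<phi> i) x \<in> \<int>" using grid_values_integral[OF i(1) i(4) i(2)] .
  then show ?thesis using i(3) unfolding l_def by simp
qed

definition missing where "missing i = {\<mu>. lo \<le> \<mu> \<and> \<mu> < hi \<and> ereal \<mu> \<notin> range (\<phi> i)}"
definition undef where "undef j = {\<mu>. lo \<le> \<mu> \<and> \<mu> < hi \<and> \<psi> j \<mu> = -\<infinity>}"
definition dim_part where "dim_part i i' = {\<mu>. ereal \<mu> \<in> range (\<phi> i') \<and> ereal \<mu> \<notin> range (\<phi> i)}"

text \<open>Up to \<open>hi\<close> the range of \<open>\<phi>\<^sub>i\<close> is the image of \<open>[qi i, (hi + qi i)/b[\<close>, of measure
  \<open>hi + qi i - b qi i\<close>; the rest of \<open>[lo, hi[\<close> is missed.\<close>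
lemma missing_measure:
  assumes i: "i \<in> {1..d}"
  shows "missing i \<in> sets lebesgue \<and> emeasure lebesgue (missing i) < \<infinity> \<and>
         measure lebesgue (missing i) = (real b - 1) * qi i - lo"
proof -
  interpret slope_fun b "\<phi> i" "real_of_int (qi i)" "Si i" "Qi i" by (rule component[OF i])
  define Y where "Y = (hi + qi i) / real b"
  have bY: "real b * Y - qi i = hi" unfolding Y_def using bpos by simp
  have YQ: "Y \<ge> Qi i" using hi_ge[OF i] bpos unfolding Y_def by (simp add: field_simps)
  have qY: "qi i \<le> Y" using q0_le_Q YQ by simp
  have img: "{\<mu>. ereal \<mu> \<in> range (\<phi> i) \<and> \<mu> < hi} = seg_image (\<phi> i) (qi i) Y"
    using range_below_tail[OF YQ] bY by simp
  have IM: "seg_image (\<phi> i) (qi i) Y \<in> sets lebesgue"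
    "emeasure lebesgue (seg_image (\<phi> i) (qi i) Y) = ennreal (real b * (Y - qi i))"
    using seg_image_measure[OF order.refl qY] by auto
  have sub: "seg_image (\<phi> i) (qi i) Y \<subseteq> {lo..<hi}" using img[symmetric] range_above_lo[OF i] by auto
  have eq: "missing i = {lo..<hi} - seg_image (\<phi> i) (qi i) Y" unfolding missing_def img[symmetric] by auto
  have fin: "emeasure lebesgue {lo..<hi} \<noteq> \<infinity>" using lo_le_hi by simp
  have sets: "missing i \<in> sets lebesgue" unfolding eq by (intro sets.Diff) (use IM in auto)
  have "emeasure lebesgue (missing i) \<le> emeasure lebesgue {lo..<hi}" unfolding eq
    by (rule emeasure_mono) (use IM in auto)
  then have finite: "emeasure lebesgue (missing i) < \<infinity>" using lo_le_hi by (simp add: le_less_trans)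
  have "measure lebesgue (seg_image (\<phi> i) (qi i) Y) = real b * (Y - qi i)"
    unfolding measure_def IM(2) using qY by simp
  then have "measure lebesgue (missing i) = (hi - lo) - real b * (Y - qi i)"
    unfolding eq using lo_le_hi by (subst measure_Diff[OF fin]) (use IM sub in auto)
  also have "\<dots> = (real b - 1) * qi i - lo" using bY by (simp add: algebra_simps)
  finally show ?thesis using sets finite by simp
qed

lemma undef_eq: assumes j: "j \<in> {1..d}" shows "undef j = {lo..<r j}"
proof -
  have undef_iff: "\<psi> j \<mu> = -\<infinity> \<longleftrightarrow> \<mu> < r j" for \<mu> using r_props[OF j] by (meson not_le)
  have "r j \<le> hi" using r_props[OF j] by simp
  then show ?thesis unfolding undef_def undef_iff by auto
qed

lemma dim_part_eq: assumes "i \<in> {1..d}" "i' \<in> {1..d}" shows "dim_part i i' = missing i - missing i'"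
proof (intro set_eqI iffI)
  fix \<mu> assume "\<mu> \<in> dim_part i i'"
  then have \<mu>: "ereal \<mu> \<in> range (\<phi> i')" "ereal \<mu> \<notin> range (\<phi> i)" unfolding dim_part_def by auto
  have "lo \<le> \<mu>" using range_above_lo[OF assms(2) \<mu>(1)] .
  moreover have "\<mu> < hi" using range_from_hi[OF assms(1)] \<mu>(2) by (meson not_le)
  ultimately show "\<mu> \<in> missing i - missing i'" using \<mu> unfolding missing_def by auto
qed (auto simp: missing_def dim_part_def)

lemma dim_part_finite:
  assumes "i \<in> {1..d}" "i' \<in> {1..d}"
  shows "dim_part i i' \<in> sets lebesgue \<and> emeasure lebesgue (dim_part i i') < \<infinity>"
proof -
  have eq: "dim_part i i' = missing i - missing i'" using dim_part_eq[OF assms] .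
  have sets: "missing i \<in> sets lebesgue" "missing i' \<in> sets lebesgue"
    and fin: "emeasure lebesgue (missing i) < \<infinity>"
    using missing_measure[OF assms(1)] missing_measure[OF assms(2)] by blast+
  have "emeasure lebesgue (dim_part i i') \<le> emeasure lebesgue (missing i)"
    unfolding eq using sets by (intro emeasure_mono) auto
  then show ?thesis unfolding eq using sets fin by (simp add: sets.Diff)
qed

lemma pointwise_identity:
  "(\<Sum>j\<in>{1..d}. real j * indicator (undef j) \<mu>) + (\<Sum>i\<in>{1..d}. \<Sum>i'\<in>{i<..d}. indicator (dim_part i i') \<mu>)
   = (\<Sum>i\<in>{1..d}. real (d + 1 - i) * indicator (missing i) \<mu>)"
proof (cases "lo \<le> \<mu> \<and> \<mu> < hi")
  case False
  then have "indicator (undef j) \<mu> = (0::real)" "indicator (missing j) \<mu> = (0::real)" for j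
    unfolding undef_def missing_def by auto
  moreover have "indicator (dim_part i i') \<mu> = (0::real)" if "i \<in> {1..d}" "i' \<in> {i<..d}" for i i'
  proof -
    have "dim_part i i' = missing i - missing i'" using that by (intro dim_part_eq) auto
    then show ?thesis using False unfolding missing_def by auto
  qed
  ultimately show ?thesis by simp
next
  case True
  define z where "z i = (ereal \<mu> \<notin> range (\<phi> i))" for i
  define c where "c = card {i\<in>{1..d}. z i}"
  have "c \<le> card {1..d}" unfolding c_def by (rule card_mono) auto
  then have initial: "{j\<in>{1..d}. j \<in> {1..c}} = {1..c}" by auto
  have undef_ind: "real j * indicator (undef j) \<mu> = (if j \<in> {1..c} then real j else 0)" if "j \<in> {1..d}" for j
  proof -
    have "\<psi> j \<mu> = -\<infinity> \<longleftrightarrow> j \<in> {1..c}" using psi_undefined_initial[of \<mu>] that unfolding c_def z_def by blast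
    then show ?thesis using True unfolding undef_def by simp
  qed
  have "(\<Sum>j\<in>{1..d}. real j * indicator (undef j) \<mu>) = (\<Sum>j\<in>{1..d}. if j \<in> {1..c} then real j else 0)"
    by (rule sum.cong) (simp_all add: undef_ind)
  also have "\<dots> = (\<Sum>j\<in>{1..c}. real j)" unfolding sum.inter_filter[symmetric, OF finite_atLeastAtMost] initial ..
  also have "\<dots> = real c * (real c + 1) / 2" by (rule sum_first_reals)
  finally have undef_sum: "(\<Sum>j\<in>{1..d}. real j * indicator (undef j) \<mu>) = real c * (real c + 1) / 2" .
  have "real (d + 1 - i) * indicator (missing i) \<mu> = (if z i then real (d + 1 - i) else 0)" for i
    using True unfolding missing_def z_def by simp
  then have missing_sum: "(\<Sum>i\<in>{1..d}. real (d + 1 - i) * indicator (missing i) \<mu>)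
      = (\<Sum>i\<in>{1..d}. if z i then real (d + 1 - i) else 0)" by (simp only:)
  have "indicator (dim_part i i') \<mu> = (if z i \<and> \<not> z i' then 1 else (0::real))" for i i'
    unfolding dim_part_def z_def by simp
  then have dim_sum: "(\<Sum>i\<in>{1..d}. \<Sum>i'\<in>{i<..d}. indicator (dim_part i i') \<mu>)
      = (\<Sum>i\<in>{1..d}. \<Sum>i'\<in>{i<..d}. if z i \<and> \<not> z i' then 1 else (0::real))" by (simp only:)
  show ?thesis unfolding undef_sum missing_sum dim_sum c_def by (rule weighted_ones_count)
qed

lemma integrated_identity:
  "(\<Sum>j\<in>{1..d}. real j * measure lebesgue (undef j)) + dim_phi d \<phi>
   = (\<Sum>i\<in>{1..d}. real (d + 1 - i) * measure lebesgue (missing i))"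
proof -
  let ?P = "Sigma {1..d} (\<lambda>i. {i<..d})"
  let ?U = "\<lambda>\<mu>. \<Sum>j\<in>{1..d}. real j * indicator (undef j) \<mu> :: real"
  let ?D = "\<lambda>\<mu>. \<Sum>p\<in>?P. 1 * indicator (dim_part (fst p) (snd p)) \<mu> :: real"
  let ?M = "\<lambda>\<mu>. \<Sum>i\<in>{1..d}. real (d + 1 - i) * indicator (missing i) \<mu> :: real"
  have undef_sets: "undef j \<in> sets lebesgue \<and> emeasure lebesgue (undef j) < \<infinity>" if "j \<in> {1..d}" for j
    unfolding undef_eq[OF that] using r_props[OF that] by simp
  have pair_sets: "dim_part (fst p) (snd p) \<in> sets lebesgue \<and> emeasure lebesgue (dim_part (fst p) (snd p)) < \<infinity>"
    if "p \<in> ?P" for p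
    using that by (intro dim_part_finite) auto
  have missing_sets: "missing i \<in> sets lebesgue \<and> emeasure lebesgue (missing i) < \<infinity>" if "i \<in> {1..d}" for i
    using missing_measure[OF that] by blast
  note U = integral_step_function[where c=real, OF finite_atLeastAtMost undef_sets]
  have "finite ?P" by auto
  note D = integral_step_function[where c="\<lambda>_. 1", OF this pair_sets]
  note M = integral_step_function[where c="\<lambda>i. real (d + 1 - i)", OF finite_atLeastAtMost missing_sets]
  have pointwise: "(\<lambda>\<mu>. ?U \<mu> + ?D \<mu>) = ?M"
    using pointwise_identity unfolding sum_upper_pairs by simp
  have "integral\<^sup>L lebesgue ?U + integral\<^sup>L lebesgue ?D = integral\<^sup>L lebesgue (\<lambda>\<mu>. ?U \<mu> + ?D \<mu>)"
    by (rule Bochner_Integration.integral_add[OF U(1) D(1), symmetric])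
  also have "\<dots> = integral\<^sup>L lebesgue ?M" by (simp only: pointwise)
  finally have "integral\<^sup>L lebesgue ?U + integral\<^sup>L lebesgue ?D = integral\<^sup>L lebesgue ?M" .
  moreover have "dim_phi d \<phi> = (\<Sum>p\<in>?P. 1 * measure lebesgue (dim_part (fst p) (snd p)))"
    unfolding dim_phi_def dim_part_def sum_upper_pairs by simp
  ultimately show ?thesis by (simp only: U(2) D(2) M(2))
qed

lemma dim_plus_weighted_r:
  "dim_phi d \<phi> + (\<Sum>j\<in>{1..d}. real j * r j) = (real b - 1) * (\<Sum>i\<in>{1..d}. real (d + 1 - i) * qi i)"
proof -
  have weights_reversed: "(\<Sum>j\<in>{1..d}. real j) = (\<Sum>i\<in>{1..d}. real (d + 1 - i))"
    using sum.atLeastAtMost_rev[of real 1 d] by simp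
  have "(\<Sum>j\<in>{1..d}. real j * measure lebesgue (undef j)) = (\<Sum>j\<in>{1..d}. real j * (r j - lo))"
    using r_props by (intro sum.cong) (auto simp: undef_eq)
  also have "\<dots> = (\<Sum>j\<in>{1..d}. real j * r j) - lo * (\<Sum>i\<in>{1..d}. real (d + 1 - i))"
    unfolding weights_reversed[symmetric]
    by (simp add: right_diff_distrib sum_subtractf sum_distrib_left mult.commute)
  finally have undef: "(\<Sum>j\<in>{1..d}. real j * measure lebesgue (undef j))
      = (\<Sum>j\<in>{1..d}. real j * r j) - lo * (\<Sum>i\<in>{1..d}. real (d + 1 - i))" .
  have "(\<Sum>i\<in>{1..d}. real (d + 1 - i) * measure lebesgue (missing i))
      = (\<Sum>i\<in>{1..d}. real (d + 1 - i) * ((real b - 1) * qi i - lo))"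
    using missing_measure by (intro sum.cong) auto
  also have "\<dots> = (real b - 1) * (\<Sum>i\<in>{1..d}. real (d + 1 - i) * qi i) - lo * (\<Sum>i\<in>{1..d}. real (d + 1 - i))"
    by (simp add: right_diff_distrib sum_subtractf sum_distrib_left mult.commute mult.left_commute)
  finally show ?thesis using integrated_identity undef by linarith
qed

theorem dim_congruence:
  "dim_phi d \<phi> \<in> \<int> \<and>
    (\<exists>k::int. dim_phi d \<phi> - (- (\<Sum>j=1..d. real j * mu1 d \<phi> \<psi> j)) = of_int k * (real b - 1))"
proof -
  define K where "K = (\<Sum>i\<in>{1..d}. int (d + 1 - i) * qi i)"
  have mu1: "(\<Sum>j=1..d. real j * mu1 d \<phi> \<psi> j) = (\<Sum>j\<in>{1..d}. real j * r j)"
    by (rule sum.cong) (auto simp: mu1_eq_r)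
  have dim: "dim_phi d \<phi> = of_int K * (real b - 1) - (\<Sum>j\<in>{1..d}. real j * r j)"
    using dim_plus_weighted_r unfolding K_def by (simp add: algebra_simps)
  have "(\<Sum>j\<in>{1..d}. real j * r j) \<in> \<int>"
    by (intro Ints_sum Ints_mult) (auto intro: r_integral)
  then have "dim_phi d \<phi> \<in> \<int>" unfolding dim by (intro Ints_diff Ints_mult) auto
  moreover have "dim_phi d \<phi> - (- (\<Sum>j=1..d. real j * mu1 d \<phi> \<psi> j)) = of_int K * (real b - 1)"
    unfolding mu1 dim by simp
  ultimately show ?thesis by blast
qed

end

theorem mainTheorem6:
  fixes b d :: nat and \<phi> \<psi> :: "nat \<Rightarrow> real \<Rightarrow> ereal"
  assumes "b \<ge> 2" and "d \<ge> 1"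
    and "Phi_Z b d \<phi>"
    and "conj_family d \<phi> \<psi>"
  shows "dim_phi d \<phi> \<in> \<int> \<and>
    (\<exists>k::int. dim_phi d \<phi> - (- (\<Sum>j=1..d. real j * mu1 d \<phi> \<psi> j)) = of_int k * (real b - 1))"
proof -
  interpret phiZ_conj b d \<phi> \<psi> using assms by unfold_locales
  show ?thesis by (rule dim_congruence)
qed

end
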